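(* Let $i\in[n-2]$ and $a\in\mathbb{Q}[x_1,\dots,x_n][S_n^{i\searrow}]$, and let $y\in\{x_1,\dots,x_n\}$. Then $a\odot R_i(y)=a\odot(y-\theta_{i+1})R_{i+1}(y)$.
   Context: Permutations in one-line notation, $wt_{i,j}$ is $w$ with positions $i<j$ swapped, $\ell$ the number of inversions, $u\lessdot w$ iff $w=ut_{i,j}$ with $\ell(w)=\ell(u)+1$. $S_n^{i\searrow}=\{v\in S_n:v(i+1)>\dots>v(n)\}$, and $\mathbb{Q}[x_1,\dots,x_n][S_n^{i\searrow}]$ is the span of $S_n^{i\searrow}$ over the polynomial ring. Fomin–Kirillov algebra $\mathcal{E}_n$: generators $d_{i,j}$ ($1\le i<j\le n$), relations $d_{i,j}^2=0$; $d_{i,j}d_{j,k}=d_{i,k}d_{i,j}+d_{j,k}d_{i,k}$ and $d_{j,k}d_{i,j}=d_{i,j}d_{i,k}+d_{i,k}d_{j,k}$ ($i<j<k$); $d_{i,j}d_{k,l}=d_{k,l}d_{i,j}$ ($i,j,k,l$ distinct). Right action: $w\odot d_{i,j}=wt_{i,j}$ if $wt_{i,j}\lessdot w$, else $0$; $\mathbb{Q}[x_1,\dots,x_n]\otimes\mathcal{E}_n$ acts on $\mathbb{Q}[x_1,\dots,x_n][S_n]$ by $(fw)\odot(g\otimes e)=fg(w\odot e)$. $B_{i,j}=d_{1,j}+\dots+d_{i,j}$; $R_i(y)=(y+B_{i,i+1})(y+B_{i,i+2})\cdots(y+B_{i,n})$. Dunkl element $\theta_i=-\sum_{j<i}d_{j,i}+\sum_{j>i}d_{i,j}$.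 *)

theory Defs
  imports Complex_Main "HOL-Library.Poly_Mapping" "HOL-Combinatorics.Transposition" "HOL-Combinatorics.Permutations"
begin

text \<open>Q[x_1,...,x_n]: multivariate polynomials with rational coefficients,
  represented as finitely supported maps from monomials (exponent vectors) to coefficients.\<close>
type_synonym qpoly = "(nat \<Rightarrow>\<^sub>0 nat) \<Rightarrow>\<^sub>0 rat"

definition Xvar :: "nat \<Rightarrow> qpoly" where
  "Xvar k = Poly_Mapping.single (Poly_Mapping.single k 1) 1"

text \<open>Elements of Q[x][S_n]: coefficient functions on permutations (in one-line notation,
  i.e. bijections of {1..n}); coefficients of non-permutations are required to be 0.\<close>
type_synonym elt = "(nat \<Rightarrow> nat) \<Rightarrow> qpoly"

definition inv_num :: "nat \<Rightarrow> (nat \<Rightarrow> nat) \<Rightarrow> nat" where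
  "inv_num n w = card {(p, q). 1 \<le> p \<and> p < q \<and> q \<le> n \<and> w p > w q}"

definition in_Sn :: "nat \<Rightarrow> elt \<Rightarrow> bool" where
  "in_Sn n a \<longleftrightarrow> (\<forall>w. a w \<noteq> 0 \<longrightarrow> w permutes {1..n})"

definition in_Sn_desc :: "nat \<Rightarrow> nat \<Rightarrow> elt \<Rightarrow> bool" where
  "in_Sn_desc n i a \<longleftrightarrow> (\<forall>w. a w \<noteq> 0 \<longrightarrow> w permutes {1..n} \<and>
      (\<forall>p q. i + 1 \<le> p \<and> p < q \<and> q \<le> n \<longrightarrow> w p > w q))"

text \<open>Right action of d_{i,j}: w \<odot> d_{ij} = w t_{ij} if w t_{ij} \<lessdot> w, else 0,
  extended Q[x]-linearly.\<close>
definition act_d :: "nat \<Rightarrow> nat \<Rightarrow> nat \<Rightarrow> elt \<Rightarrow> elt" where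
  "act_d n i j a = (\<lambda>v. if v permutes {1..n} \<and> inv_num n (v \<circ> transpose i j) = inv_num n v + 1
                          then a (v \<circ> transpose i j) else 0)"

definition act_B :: "nat \<Rightarrow> nat \<Rightarrow> nat \<Rightarrow> elt \<Rightarrow> elt" where
  "act_B n i j a = (\<lambda>v. \<Sum>k = 1..i. act_d n k j a v)"

definition act_yB :: "nat \<Rightarrow> qpoly \<Rightarrow> nat \<Rightarrow> nat \<Rightarrow> elt \<Rightarrow> elt" where
  "act_yB n y i j a = (\<lambda>v. y * a v + act_B n i j a v)"

text \<open>Action of R_i(y) = (y + B_{i,i+1}) (y + B_{i,i+2}) ... (y + B_{i,n}); being a right
  action, the leftmost factor acts first.\<close>
definition act_R :: "nat \<Rightarrow> nat \<Rightarrow> qpoly \<Rightarrow> elt \<Rightarrow> elt" where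
  "act_R n i y a = fold (\<lambda>j b. act_yB n y i j b) [i + 1 ..< n + 1] a"

definition act_theta :: "nat \<Rightarrow> nat \<Rightarrow> elt \<Rightarrow> elt" where
  "act_theta n i a = (\<lambda>v. - (\<Sum>j = 1..<i. act_d n j i a v) + (\<Sum>j = i + 1..n. act_d n i j a v))"

end

theory Submission
  imports Defs
begin

text \<open>
  On S_n^{i\<searrow>} the operators d_{i+1,j} with j \<ge> i + 3 vanish, since w(i+1) > w(i+2) > w(j)
  leaves no room for a cover w t_{i+1,j} \<lessdot> w, and every factor y + B_{i,j} maps
  S_n^{i\<searrow>} to itself. Hence all factors of R_{i+1}(y) beyond the first act like the
  corresponding factors of R_i(y). On S_n^{i\<searrow>} the Dunkl element reduces to
  \<theta>_{i+1} = -B_{i,i+1} + d_{i+1,i+2}, so for the first two factors the claim becomes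
  (a(y + B_{i,i+1}) - a d_{i+1,i+2})(y + B_{i+1,i+2}) = a(y + B_{i,i+1})(y + B_{i,i+2}),
  which follows from d_{i+1,i+2}^2 = 0 and the exchange rule
  a d_{k,i+1} d_{i+1,i+2} = a d_{i+1,i+2} d_{k,i+2} for k \<le> i. Everything is checked on
  covers, using that v t_{k,j} covers v iff v(k) < v(j) and no position strictly between
  k and j carries a value strictly between v(k) and v(j).
\<close>

lemma inv_num_eq_sum:
  "inv_num n w = (\<Sum>(p, q)\<in>{1..n}\<times>{1..n}. if p < q \<and> w q < w p then 1 else 0)"
proof -
  have "{(p, q). 1 \<le> p \<and> p < q \<and> q \<le> n \<and> w p > w q}
      = {x\<in>{1..n}\<times>{1..n}. fst x < snd x \<and> w (snd x) < w (fst x)}" by auto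
  then show ?thesis
    unfolding inv_num_def case_prod_unfold by (simp add: sum.If_cases Int_def)
qed

lemma inv_num_comp_transpose_eq_sum:
  assumes "k \<in> {1..n}" "j \<in> {1..n}"
  shows "inv_num n (w \<circ> transpose k j) =
    (\<Sum>(p, q)\<in>{1..n}\<times>{1..n}. if transpose k j p < transpose k j q \<and> w q < w p then 1 else 0)"
  unfolding inv_num_eq_sum
  by (rule sum.reindex_bij_witness[where i="map_prod (transpose k j) (transpose k j)"
        and j="map_prod (transpose k j) (transpose k j)"])
    (use assms in \<open>auto simp: transpose_def\<close>)

lemma double_sum_insert_insert:
  fixes f :: "'a \<Rightarrow> 'a \<Rightarrow> 'b::comm_monoid_add"
  assumes "finite R" "k \<notin> R" "j \<notin> R" "k \<noteq> j" "\<And>a b. a \<in> R \<Longrightarrow> b \<in> R \<Longrightarrow> f a b = 0"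
  shows "(\<Sum>a\<in>insert k (insert j R). \<Sum>b\<in>insert k (insert j R). f a b) =
    f k k + f k j + f j k + f j j + (\<Sum>p\<in>R. f k p + f j p + f p k + f p j)"
  using assms by (simp add: sum.distrib add_ac)

lemma inv_num_comp_transpose_diff:
  assumes inj: "inj_on w {1..n}" and kj: "1 \<le> k" "k < j" "j \<le> n"
  shows "int (inv_num n (w \<circ> transpose k j)) - int (inv_num n w) =
    (if w k < w j then 1 else -1) +
    (\<Sum>p\<in>{k<..<j}. of_bool (w p < w j) - of_bool (w p < w k) + of_bool (w k < w p) - of_bool (w j < w p))"
proof -
  let ?t = "transpose k j"
  define h :: "nat \<Rightarrow> nat \<Rightarrow> int" where
    "h p q = (if ?t p < ?t q \<and> w q < w p then 1 else 0) - (if p < q \<and> w q < w p then 1 else 0)" for p q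
  define R where "R = {1..n} - {k, j}"
  have IR: "{1..n} = insert k (insert j R)"
    using kj by (auto simp: R_def)
  have wkj: "w k \<noteq> w j"
    using inj kj by (auto dest: inj_onD)
  have "int (inv_num n (w \<circ> ?t)) - int (inv_num n w) = (\<Sum>(p, q)\<in>{1..n}\<times>{1..n}. h p q)"
  proof -
    have "inv_num n (w \<circ> ?t) =
      (\<Sum>(p, q)\<in>{1..n}\<times>{1..n}. if ?t p < ?t q \<and> w q < w p then 1 else 0)"
      using kj by (intro inv_num_comp_transpose_eq_sum) auto
    then show ?thesis
      unfolding inv_num_eq_sum[of n w] h_def
      by (simp add: case_prod_unfold flip: sum_subtractf, intro sum.cong, auto)
  qed
  also have "\<dots> = (\<Sum>p\<in>{1..n}. \<Sum>q\<in>{1..n}. h p q)"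
    by (simp add: sum.cartesian_product)
  also have "\<dots> = h k k + h k j + h j k + h j j + (\<Sum>p\<in>R. h k p + h j p + h p k + h p j)"
    unfolding IR by (rule double_sum_insert_insert) (use kj in \<open>auto simp: R_def h_def transpose_def\<close>)
  also have "h k k + h k j + h j k + h j j = (if w k < w j then 1 else -1)"
    using kj wkj by (auto simp: h_def)
  also have "(\<Sum>p\<in>R. h k p + h j p + h p k + h p j) = (\<Sum>p\<in>{k<..<j}.
      of_bool (w p < w j) - of_bool (w p < w k) + of_bool (w k < w p) - of_bool (w j < w p))"
    by (rule sum.mono_neutral_cong_right) (use kj in \<open>auto simp: R_def h_def transpose_def\<close>)
  finally show ?thesis .
qed

definition covers_transpose :: "nat \<Rightarrow> (nat \<Rightarrow> nat) \<Rightarrow> nat \<Rightarrow> nat \<Rightarrow> bool" where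
  "covers_transpose n v k j \<longleftrightarrow> inv_num n (v \<circ> transpose k j) = inv_num n v + 1"

lemma covers_transpose_iff:
  assumes perm: "v permutes {1..n}" and kj: "1 \<le> k" "k < j" "j \<le> n"
  shows "covers_transpose n v k j \<longleftrightarrow>
     v k < v j \<and> (\<forall>p. k < p \<longrightarrow> p < j \<longrightarrow> \<not> (v k < v p \<and> v p < v j))"
proof -
  let ?g = "\<lambda>p. of_bool (v p < v j) - of_bool (v p < v k) + of_bool (v k < v p) - of_bool (v j < v p) :: int"
  have inj: "inj v"
    using perm by (rule permutes_inj)
  have diff: "int (inv_num n (v \<circ> transpose k j)) - int (inv_num n v) =
      (if v k < v j then 1 else -1) + sum ?g {k<..<j}"
    using inj_on_subset[OF inj] kj by (intro inv_num_comp_transpose_diff) auto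
  have v_ne: "v p \<noteq> v k" "v p \<noteq> v j" if "p \<in> {k<..<j}" for p
    using that inj by (auto dest: injD)
  show ?thesis
  proof (cases "v k < v j")
    case True
    then have g: "?g p = (if v k < v p \<and> v p < v j then 2 else 0)" if "p \<in> {k<..<j}" for p
      using v_ne[OF that] by auto
    have "covers_transpose n v k j \<longleftrightarrow> sum ?g {k<..<j} = 0"
      using diff True by (auto simp: covers_transpose_def)
    also have "\<dots> \<longleftrightarrow> (\<forall>p\<in>{k<..<j}. ?g p = 0)"
      by (rule sum_nonneg_eq_0_iff) (auto simp: g)
    also have "\<dots> \<longleftrightarrow> (\<forall>p. k < p \<longrightarrow> p < j \<longrightarrow> \<not> (v k < v p \<and> v p < v j))"
      using g by auto
    finally show ?thesis
      using True by simp
  next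
    case False
    then have "?g p \<le> 0" if "p \<in> {k<..<j}" for p
      using v_ne[OF that] by auto
    then have "sum ?g {k<..<j} \<le> 0"
      by (rule sum_nonpos)
    then show ?thesis
      using diff False by (auto simp: covers_transpose_def)
  qed
qed

lemma act_d_apply:
  "act_d n k j a v =
    (if v permutes {1..n} \<and> covers_transpose n v k j then a (v \<circ> transpose k j) else 0)"
  by (simp add: act_d_def covers_transpose_def)

lemma act_d_act_d: "act_d n k j (act_d n k j a) = (\<lambda>v. 0)"
  by (simp add: act_d_def comp_assoc fun_eq_iff)

lemma act_d_diff: "act_d n k j (\<lambda>v. a v - b v) = (\<lambda>v. act_d n k j a v - act_d n k j b v)"
  by (simp add: act_d_def fun_eq_iff)

lemma act_d_act_yB:
  "act_d n k l (act_yB n y i j a) =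
     (\<lambda>v. y * act_d n k l a v + (\<Sum>m = 1..i. act_d n k l (act_d n m j a) v))"
proof
  fix v
  show "act_d n k l (act_yB n y i j a) v =
      y * act_d n k l a v + (\<Sum>m = 1..i. act_d n k l (act_d n m j a) v)"
  proof (cases "v permutes {1..n} \<and> covers_transpose n v k l")
    case True
    then show ?thesis
      by (simp add: act_d_apply act_yB_def act_B_def)
  next
    case False
    then show ?thesis
      by (simp only: act_d_apply if_not_P[OF False]) simp
  qed
qed

lemma act_yB_Suc: "act_yB n y (Suc i) j a v = act_yB n y i j a v + act_d n (Suc i) j a v"
  by (simp add: act_yB_def act_B_def)

lemma act_d_nonzeroE:
  assumes "act_d n k j a v \<noteq> 0"
  obtains "v permutes {1..n}" "covers_transpose n v k j" "a (v \<circ> transpose k j) \<noteq> 0"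
  using assms by (auto simp: act_d_apply split: if_splits)

lemma act_d_in_Sn_desc_eq_0:
  assumes a: "in_Sn_desc n i a" and j: "i + 3 \<le> j" "j \<le> n"
  shows "act_d n (i + 1) j a = (\<lambda>v. 0)"
proof
  fix v
  show "act_d n (i + 1) j a v = 0"
  proof (rule ccontr)
    assume "act_d n (i + 1) j a v \<noteq> 0"
    then obtain perm: "v permutes {1..n}"
      and cover: "covers_transpose n v (i + 1) j"
      and aw: "a (v \<circ> transpose (i + 1) j) \<noteq> 0"
      by (rule act_d_nonzeroE)
    have dec: "(v \<circ> transpose (i + 1) j) q < (v \<circ> transpose (i + 1) j) p"
      if "i < p" "p < q" "q \<le> n" for p q
      using a aw that unfolding in_Sn_desc_def by auto
    have "v (i + 1) < v (i + 2)" "v (i + 2) < v j"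
      using dec[of "i + 2" j] dec[of "i + 1" "i + 2"] j by (simp_all add: transpose_def)
    then show False
      using cover j covers_transpose_iff[OF perm, of "i + 1" j] by auto
  qed
qed

lemma in_Sn_desc_act_d:
  assumes a: "in_Sn_desc n i a" and kij: "1 \<le> k" "k \<le> i" "i < j" "j \<le> n"
  shows "in_Sn_desc n i (act_d n k j a)"
  unfolding in_Sn_desc_def
proof (intro allI impI)
  fix v
  assume "act_d n k j a v \<noteq> 0"
  then obtain perm: "v permutes {1..n}"
      and cover: "covers_transpose n v k j"
      and aw: "a (v \<circ> transpose k j) \<noteq> 0"
    by (rule act_d_nonzeroE)
  have v_cover: "v k < v j" "\<And>p. k < p \<Longrightarrow> p < j \<Longrightarrow> \<not> (v k < v p \<and> v p < v j)"
    using covers_transpose_iff[OF perm, of k j] cover kij by auto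
  show "v permutes {1..n} \<and> (\<forall>p q. i + 1 \<le> p \<and> p < q \<and> q \<le> n \<longrightarrow> v q < v p)"
  proof (intro conjI allI impI)
    fix p q
    assume pq: "i + 1 \<le> p \<and> p < q \<and> q \<le> n"
    have dec: "(v \<circ> transpose k j) q < (v \<circ> transpose k j) p"
      using a aw pq unfolding in_Sn_desc_def by auto
    have "v p \<noteq> v j" if "p \<noteq> j"
      using permutes_inj[OF perm] that by (auto dest: injD)
    then show "v q < v p"
      using dec v_cover(1) v_cover(2)[of p] pq kij by (auto simp: transpose_def split: if_splits)
  qed (fact perm)
qed

lemma in_Sn_desc_act_yB:
  assumes a: "in_Sn_desc n i a" and ij: "i < j" "j \<le> n"
  shows "in_Sn_desc n i (act_yB n y i j a)"
  unfolding in_Sn_desc_def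
proof (intro allI impI)
  fix v
  assume "act_yB n y i j a v \<noteq> 0"
  then have "a v \<noteq> 0 \<or> (\<exists>k\<in>{1..i}. act_d n k j a v \<noteq> 0)"
    unfolding act_yB_def act_B_def by (metis add.right_neutral mult_zero_right sum.neutral)
  then show "v permutes {1..n} \<and> (\<forall>p q. i + 1 \<le> p \<and> p < q \<and> q \<le> n \<longrightarrow> v q < v p)"
    using a in_Sn_desc_act_d[OF a _ _ ij] unfolding in_Sn_desc_def by auto
qed

lemma covers_transpose_exchange_iff:
  assumes perm: "v permutes {1..n}" and kl: "1 \<le> k" "k < l" "l + 1 \<le> n" and vlk: "v l < v k"
  shows "covers_transpose n v l (l + 1) \<and> covers_transpose n (v \<circ> transpose l (l + 1)) k l \<longleftrightarrow>
    covers_transpose n v k (l + 1) \<and> covers_transpose n (v \<circ> transpose k (l + 1)) l (l + 1)"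
proof -
  let ?between = "v k < v (l + 1) \<and> (\<forall>p. k < p \<longrightarrow> p < l \<longrightarrow> \<not> (v k < v p \<and> v p < v (l + 1)))"
  have perm1: "v \<circ> transpose l (l + 1) permutes {1..n}" and perm2: "v \<circ> transpose k (l + 1) permutes {1..n}"
    using perm kl by (auto intro!: permutes_compose permutes_swap_id)
  have "covers_transpose n v l (l + 1) \<longleftrightarrow> v l < v (l + 1)"
    using covers_transpose_iff[OF perm, of l "l + 1"] kl by auto
  moreover have "covers_transpose n (v \<circ> transpose l (l + 1)) k l \<longleftrightarrow> ?between"
    using covers_transpose_iff[OF perm1, of k l] kl by (auto simp: transpose_def)
  moreover have "covers_transpose n v k (l + 1) \<longleftrightarrow> ?between"
    using covers_transpose_iff[OF perm, of k "l + 1"] kl vlk by (auto simp: less_Suc_eq)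
  moreover have "covers_transpose n (v \<circ> transpose k (l + 1)) l (l + 1) \<longleftrightarrow> v l < v k"
    using covers_transpose_iff[OF perm2, of l "l + 1"] kl by (auto simp: transpose_def)
  ultimately show ?thesis
    using vlk by auto
qed

text \<open>The instance d_{k,l} d_{l,l+1} = d_{k,l+1} d_{k,l} + d_{l,l+1} d_{k,l+1} of the
  Fomin--Kirillov relations, whose first term on the right vanishes on elements supported on
  permutations with a descent at l.\<close>

lemma act_d_exchange:
  assumes a: "\<And>w. a w \<noteq> 0 \<Longrightarrow> w permutes {1..n} \<and> w (l + 1) < w l"
    and kl: "1 \<le> k" "k < l" "l + 1 \<le> n"
  shows "act_d n l (l + 1) (act_d n k l a) = act_d n k (l + 1) (act_d n l (l + 1) a)"
proof
  fix v :: "nat \<Rightarrow> nat"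
  let ?w = "v \<circ> transpose l (l + 1) \<circ> transpose k l"
  have w: "v \<circ> transpose k (l + 1) \<circ> transpose l (l + 1) = ?w"
    using kl by (auto simp: fun_eq_iff transpose_def)
  show "act_d n l (l + 1) (act_d n k l a) v = act_d n k (l + 1) (act_d n l (l + 1) a) v"
  proof (cases "v permutes {1..n} \<and> a ?w \<noteq> 0")
    case True
    then have perm: "v permutes {1..n}" by simp
    have "v l < v k"
      using a[of ?w] True kl by (simp add: transpose_def)
    have "act_d n l (l + 1) (act_d n k l a) v = (if covers_transpose n v l (l + 1) \<and>
        covers_transpose n (v \<circ> transpose l (l + 1)) k l then a ?w else 0)"
      using perm kl by (simp add: act_d_apply permutes_compose permutes_swap_id)
    also have "\<dots> = (if covers_transpose n v k (l + 1) \<and>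
        covers_transpose n (v \<circ> transpose k (l + 1)) l (l + 1) then a ?w else 0)"
      using covers_transpose_exchange_iff[OF perm kl \<open>v l < v k\<close>] by simp
    also have "\<dots> = act_d n k (l + 1) (act_d n l (l + 1) a) v"
      using perm kl by (simp add: act_d_apply w[simplified] permutes_compose permutes_swap_id)
    finally show ?thesis .
  next
    case False
    then show ?thesis
      by (auto simp: act_d_apply w[simplified])
  qed
qed

lemma act_theta_in_Sn_desc:
  assumes a: "in_Sn_desc n i a" and i: "i + 2 \<le> n"
  shows "act_theta n (i + 1) a v = - (\<Sum>j = 1..i. act_d n j (i + 1) a v) + act_d n (i + 1) (i + 2) a v"
proof -
  have "{i + 2..n} = insert (i + 2) {i + 3..n}"
    using i by auto
  moreover have "(\<Sum>j = i + 3..n. act_d n (i + 1) j a v) = 0"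
    using act_d_in_Sn_desc_eq_0[OF a] by simp
  ultimately show ?thesis
    unfolding act_theta_def by (simp add: atLeastLessThanSuc_atLeastAtMost)
qed

lemma fold_act_yB_Suc_in_Sn_desc:
  assumes "in_Sn_desc n i a" and "\<forall>j\<in>set js. i + 3 \<le> j \<and> j \<le> n"
  shows "fold (\<lambda>j b. act_yB n y (i + 1) j b) js a = fold (\<lambda>j b. act_yB n y i j b) js a"
  using assms
proof (induction js arbitrary: a)
  case Nil
  then show ?case by simp
next
  case (Cons j js)
  then have j: "i + 3 \<le> j" "j \<le> n" by auto
  have "act_yB n y (i + 1) j a = act_yB n y i j a"
    using act_d_in_Sn_desc_eq_0[OF Cons.prems(1) j] by (simp add: act_yB_Suc fun_eq_iff)
  moreover have "in_Sn_desc n i (act_yB n y i j a)"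
    using in_Sn_desc_act_yB[OF Cons.prems(1)] j by simp
  ultimately show ?case
    using Cons.IH Cons.prems(2) by simp
qed

lemma act_yB_sub_act_theta:
  assumes a: "in_Sn_desc n i a" and i: "i + 2 \<le> n"
  shows "act_yB n y (i + 1) (i + 2) (\<lambda>v. y * a v - act_theta n (i + 1) a v) =
    act_yB n y i (i + 2) (act_yB n y i (i + 1) a)"
proof
  fix v
  define b where "b = act_yB n y i (i + 1) a"
  define c where "c = act_d n (i + 1) (i + 2) a"
  have theta: "(\<lambda>v. y * a v - act_theta n (i + 1) a v) = (\<lambda>v. b v - c v)"
    using act_theta_in_Sn_desc[OF a i] by (simp add: fun_eq_iff act_yB_def act_B_def b_def c_def)
  have "act_d n (i + 1) (i + 2) c = (\<lambda>v. 0)"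
    unfolding c_def by (rule act_d_act_d)
  moreover have "act_d n (i + 1) (i + 2) b v = y * c v + (\<Sum>m = 1..i. act_d n m (i + 2) c v)"
  proof -
    have "\<And>w. a w \<noteq> 0 \<Longrightarrow> w permutes {1..n} \<and> w (i + 2) < w (i + 1)"
      using a i unfolding in_Sn_desc_def by auto
    then have "act_d n (i + 1) (i + 2) (act_d n m (i + 1) a) = act_d n m (i + 2) c" if "m \<in> {1..i}" for m
      using act_d_exchange[of a n "i + 1" m] that i by (simp add: c_def)
    then show ?thesis
      unfolding b_def act_d_act_yB by (simp add: c_def)
  qed
  ultimately have "act_yB n y (i + 1) (i + 2) (\<lambda>v. b v - c v) v = act_yB n y i (i + 2) b v"
    by (simp add: act_d_diff algebra_simps act_yB_def act_B_def sum_subtractf)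
  then show "act_yB n y (i + 1) (i + 2) (\<lambda>v. y * a v - act_theta n (i + 1) a v) v =
      act_yB n y i (i + 2) (act_yB n y i (i + 1) a) v"
    unfolding theta by (simp add: b_def)
qed

theorem lemma4p21:
  fixes n i k :: nat and a :: elt
  assumes "1 \<le> i" and "i \<le> n - 2"
    and "in_Sn_desc n i a"
    and "1 \<le> k" and "k \<le> n"
  shows "act_R n i (Xvar k) a =
         act_R n (i + 1) (Xvar k) (\<lambda>v. Xvar k * a v - act_theta n (i + 1) a v)"
proof -
  let ?F = "\<lambda>j b. act_yB n (Xvar k) i j b" and ?G = "\<lambda>j b. act_yB n (Xvar k) (i + 1) j b"
  let ?tail = "[i + 3..<n + 1]" and ?a' = "\<lambda>v. Xvar k * a v - act_theta n (i + 1) a v"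
  have i: "i + 2 \<le> n"
    using assms(1,2) by simp
  have split: "[i + 1..<n + 1] = (i + 1) # (i + 2) # ?tail" "[i + 1 + 1..<n + 1] = (i + 2) # ?tail"
    using i by (simp_all add: upt_conv_Cons numeral_3_eq_3)
  have "act_R n i (Xvar k) a = fold ?F ?tail (?F (i + 2) (?F (i + 1) a))"
    unfolding act_R_def split by simp
  also have "\<dots> = fold ?G ?tail (?F (i + 2) (?F (i + 1) a))"
    using i assms(3) by (intro fold_act_yB_Suc_in_Sn_desc[symmetric] in_Sn_desc_act_yB) auto
  also have "?F (i + 2) (?F (i + 1) a) = ?G (i + 2) ?a'"
    using act_yB_sub_act_theta[OF assms(3) i] by simp
  also have "fold ?G ?tail (?G (i + 2) ?a') = act_R n (i + 1) (Xvar k) ?a'"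
    unfolding act_R_def split by simp
  finally show ?thesis .
qed

end
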